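(* Let $T \in \mathscr{B}(\mathscr{H})$ be an analytic left invertible operator with $\operatorname{ind}(T) = -n$ for a positive integer $n$, and let $\Omega_T := \{z \in \mathbb{C}: |z| < \|T^\dagger\|^{-1}\}$. Then $T^* \in B_n(\Omega_T)$.
   Context: For a left invertible $T$, $T^\dagger = (T^*T)^{-1}T^*$ is its Moore–Penrose inverse; $T$ is analytic if $\bigcap_{n\ge1}T^n\mathscr{H} = \{0\}$. For an open $\Omega \subset \mathbb{C}$ and positive integer $n$, the Cowen–Douglas class $B_n(\Omega)$ consists of $R \in \mathscr{B}(\mathscr{H})$ with: $\Omega \subset \sigma(R)$; $(R-\lambda)\mathscr{H} = \mathscr{H}$ for all $\lambda\in\Omega$; $\dim\ker(R-\lambda) = n$ for all $\lambda \in \Omega$; and the closed span of $\bigcup_{\lambda\in\Omega}\ker(R-\lambda)$ is $\mathscr{H}$. *)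

theory Defs
  imports "HOL-Analysis.Analysis"
begin

class complex_vector = real_vector +
  fixes scaleC :: "complex \<Rightarrow> 'a \<Rightarrow> 'a"
  assumes scaleC_add_right: "scaleC a (x + y) = scaleC a x + scaleC a y"
    and scaleC_add_left: "scaleC (a + b) x = scaleC a x + scaleC b x"
    and scaleC_scaleC: "scaleC a (scaleC b x) = scaleC (a * b) x"
    and scaleC_one: "scaleC 1 x = x"
    and scaleR_scaleC: "scaleR r x = scaleC (complex_of_real r) x"

class complex_normed_vector = complex_vector + real_normed_vector +
  assumes norm_scaleC: "norm (scaleC a x) = cmod a * norm x"

text \<open>Inner product, conjugate-linear in the first and linear in the second argument.\<close>
class complex_inner = complex_normed_vector +
  fixes cinner :: "'a \<Rightarrow> 'a \<Rightarrow> complex"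
  assumes cinner_commute: "cinner x y = cnj (cinner y x)"
    and cinner_add_right: "cinner x (y + z) = cinner x y + cinner x z"
    and cinner_scaleC_right: "cinner x (scaleC c y) = c * cinner x y"
    and cinner_self_norm: "cinner x x = complex_of_real ((norm x)\<^sup>2)"

class chilbert_space = complex_inner + complete_space

definition cspan :: "'a::complex_vector set \<Rightarrow> 'a set" where
  "cspan S = module.span scaleC S"

definition cdim :: "'a::complex_vector set \<Rightarrow> nat" where
  "cdim S = vector_space.dim scaleC S"

definition fin_cdim :: "'a::complex_vector set \<Rightarrow> bool" where
  "fin_cdim S \<longleftrightarrow> (\<exists>B. finite B \<and> cspan B = S)"

definition orth :: "'a::complex_inner set \<Rightarrow> 'a set" where
  "orth S = {x. \<forall>y\<in>S. cinner y x = 0}"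

definition kernel :: "('a \<Rightarrow> 'b::zero) \<Rightarrow> 'a set" where
  "kernel T = {x. T x = 0}"

definition bounded_clinear :: "('a::complex_normed_vector \<Rightarrow> 'b::complex_normed_vector) \<Rightarrow> bool" where
  "bounded_clinear f \<longleftrightarrow> bounded_linear f \<and> (\<forall>c x. f (scaleC c x) = scaleC c (f x))"

definition adjoint :: "('a::chilbert_space \<Rightarrow> 'a) \<Rightarrow> ('a \<Rightarrow> 'a)" where
  "adjoint T = (SOME S. \<forall>x y. cinner (T x) y = cinner x (S y))"

definition invertible_op :: "('a::complex_normed_vector \<Rightarrow> 'a) \<Rightarrow> bool" where
  "invertible_op T \<longleftrightarrow> bounded_clinear T \<and>
     (\<exists>S. bounded_clinear S \<and> (\<forall>x. S (T x) = x) \<and> (\<forall>x. T (S x) = x))"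

definition left_invertible :: "('a::complex_normed_vector \<Rightarrow> 'a) \<Rightarrow> bool" where
  "left_invertible T \<longleftrightarrow> bounded_clinear T \<and> (\<exists>S. bounded_clinear S \<and> (\<forall>x. S (T x) = x))"

definition moore_penrose :: "('a::chilbert_space \<Rightarrow> 'a) \<Rightarrow> ('a \<Rightarrow> 'a)" where
  "moore_penrose T = inv (adjoint T \<circ> T) \<circ> adjoint T"

definition analytic_op :: "('a::complex_normed_vector \<Rightarrow> 'a) \<Rightarrow> bool" where
  "analytic_op T \<longleftrightarrow> (\<Inter>k\<in>{1..}. range (T ^^ k)) = {0}"

text \<open>Fredholm operators and their index; the cokernel H / ran T is identified with
  the orthogonal complement of the (closed) range.\<close>
definition fredholm :: "('a::chilbert_space \<Rightarrow> 'a) \<Rightarrow> bool" where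
  "fredholm T \<longleftrightarrow> bounded_clinear T \<and> closed (range T) \<and>
     fin_cdim (kernel T) \<and> fin_cdim (orth (range T))"

definition fredholm_index :: "('a::chilbert_space \<Rightarrow> 'a) \<Rightarrow> int" where
  "fredholm_index T = int (cdim (kernel T)) - int (cdim (orth (range T)))"

definition op_spectrum :: "('a::complex_normed_vector \<Rightarrow> 'a) \<Rightarrow> complex set" where
  "op_spectrum R = {l. \<not> invertible_op (\<lambda>x. R x - scaleC l x)}"

definition cowen_douglas :: "nat \<Rightarrow> complex set \<Rightarrow> ('a::chilbert_space \<Rightarrow> 'a) \<Rightarrow> bool" where
  "cowen_douglas n \<Omega> R \<longleftrightarrow> open \<Omega> \<and> bounded_clinear R \<and>
     \<Omega> \<subseteq> op_spectrum R \<and>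
     (\<forall>l\<in>\<Omega>. surj (\<lambda>x. R x - scaleC l x)) \<and>
     (\<forall>l\<in>\<Omega>. fin_cdim (kernel (\<lambda>x. R x - scaleC l x)) \<and>
              cdim (kernel (\<lambda>x. R x - scaleC l x)) = n) \<and>
     closure (cspan (\<Union>l\<in>\<Omega>. kernel (\<lambda>x. R x - scaleC l x))) = UNIV"

end

theory Submission
  imports Defs
begin

(* Let L be the Moore-Penrose inverse of T. Since L T = 1, the adjoint L* is a bounded right
   inverse of T*, and T* - mu factors as T* composed with 1 - mu L*. For |mu| ||L|| < 1 the
   operator 1 - mu L* is invertible by the Banach fixed point theorem, so T* - mu is onto and
   1 - mu L* maps its kernel isomorphically onto ker T*, the orthogonal complement of ran T,
   which has dimension n by the index hypothesis. For density, let z be orthogonal to all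
   these kernels. Then so is L z, and z = T (L z) because z is orthogonal to ker T*.
   Iterating, z = T^k (L^k z) lies in the range of every power of T, so z = 0 by
   analyticity. *)

interpretation cv: vector_space "scaleC :: complex \<Rightarrow> 'a::complex_vector \<Rightarrow> 'a"
  by unfold_locales (auto simp: scaleC_add_right scaleC_add_left scaleC_scaleC scaleC_one)

lemma cspan_eq_span: "cspan = cv.span"
  by (rule ext) (simp add: cspan_def)

lemma cdim_eq_dim: "cdim = cv.dim"
  by (rule ext) (simp add: cdim_def)

lemma cdim_subset_zero: "S \<subseteq> {0} \<Longrightarrow> cdim S = 0"
  using cv.dim_le_card[of S "{}"] by (simp add: cdim_eq_dim)

lemma cdim_pos_obtains_nonzero:
  assumes "0 < cdim S"
  obtains x where "x \<in> S" "x \<noteq> 0"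
proof -
  have "\<not> S \<subseteq> {0}"
    using assms cdim_subset_zero by (metis less_irrefl)
  with that show thesis
    by blast
qed

lemma cdim_inj_image:
  assumes "module_hom scaleC scaleC f" and "inj f"
  shows "cdim (f ` U) = cdim U"
proof -
  interpret f: module_hom "scaleC :: complex \<Rightarrow> 'a::complex_vector \<Rightarrow> 'a"
      "scaleC :: complex \<Rightarrow> 'b::complex_vector \<Rightarrow> 'b" f
    by fact
  have inj: "inj_on f A" for A
    using \<open>inj f\<close> subset_UNIV by (rule inj_on_subset)
  obtain B where B: "B \<subseteq> U" "cv.independent B" "U \<subseteq> cv.span B" "card B = cv.dim U"
    using cv.basis_exists by blast
  have "card (f ` B) = cv.dim (f ` U)"
  proof (rule cv.basis_card_eq_dim)
    show "f ` B \<subseteq> f ` U"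
      using B(1) by (rule image_mono)
    show "f ` U \<subseteq> cv.span (f ` B)"
      using B(3) by (rule f.spans_image)
    show "cv.independent (f ` B)"
      using B(2) inj by (rule f.independent_injective_image)
  qed
  thus ?thesis
    using B(4) card_image[OF inj] by (simp add: cdim_eq_dim)
qed

lemma fin_cdim_inj_image:
  assumes "module_hom scaleC scaleC f" and "inj f" and "cv.subspace U" and "fin_cdim (f ` U)"
  shows "fin_cdim U"
proof -
  interpret f: module_hom "scaleC :: complex \<Rightarrow> 'a::complex_vector \<Rightarrow> 'a"
      "scaleC :: complex \<Rightarrow> 'b::complex_vector \<Rightarrow> 'b" f
    by fact
  have inj: "inj_on f A" for A
    using \<open>inj f\<close> subset_UNIV by (rule inj_on_subset)
  obtain B where B: "B \<subseteq> U" "cv.independent B" "U \<subseteq> cv.span B"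
    by (rule cv.maximal_independent_subset)
  obtain F where F: "finite F" "cv.span F = f ` U"
    using assms(4) unfolding fin_cdim_def cspan_eq_span by blast
  have "f ` B \<subseteq> cv.span F"
    using image_mono[OF B(1)] F(2) by simp
  hence "finite (f ` B)"
    using cv.independent_span_bound[OF F(1) f.independent_injective_image[OF B(2) inj]] by simp
  hence "finite B"
    by (simp add: finite_image_iff[OF inj])
  moreover have "cv.span B = U"
    using B assms(3) by (intro cv.span_subspace)
  ultimately show ?thesis
    unfolding fin_cdim_def cspan_eq_span by blast
qed

lemma cinner_add_left: "cinner (x + y) z = cinner x z + cinner y z"
  by (metis cinner_commute cinner_add_right complex_cnj_add)

lemma cinner_scaleC_left: "cinner (scaleC c x) y = cnj c * cinner x y"
  by (metis cinner_commute cinner_scaleC_right complex_cnj_mult)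

lemma cinner_zero_right [simp]: "cinner x 0 = 0"
  using cinner_add_right[of x 0 0] by simp

lemma cinner_zero_left [simp]: "cinner 0 x = 0"
  using cinner_add_left[of 0 0 x] by simp

lemma cinner_diff_right: "cinner x (y - z) = cinner x y - cinner x z"
  using cinner_add_right[of x "y - z" z] by simp

lemma cinner_diff_left: "cinner (x - y) z = cinner x z - cinner y z"
  using cinner_add_left[of "x - y" y z] by simp

lemma cinner_self_eq_0 [simp]: "cinner x x = 0 \<longleftrightarrow> x = 0"
  by (simp add: cinner_self_norm)

lemma cinner_ext:
  assumes "\<And>x. cinner x u = cinner x v"
  shows "u = v"
proof -
  have "cinner (u - v) (u - v) = 0"
    by (simp add: cinner_diff_right assms)
  thus ?thesis
    by simp
qed

lemma norm_diff_square: "(norm (x - y))\<^sup>2 = (norm x)\<^sup>2 - 2 * Re (cinner x y) + (norm y)\<^sup>2"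
proof -
  have "complex_of_real ((norm (x - y))\<^sup>2) = cinner (x - y) (x - y)"
    by (simp add: cinner_self_norm)
  also have "\<dots> = cinner x x - (cinner x y + cnj (cinner x y)) + cinner y y"
    by (simp add: cinner_diff_left cinner_diff_right cinner_commute[of y x])
  also have "\<dots> = complex_of_real ((norm x)\<^sup>2 - 2 * Re (cinner x y) + (norm y)\<^sup>2)"
    by (simp add: cinner_self_norm complex_add_cnj)
  finally show ?thesis
    by (simp only: of_real_eq_iff)
qed

lemma parallelogram_law:
  fixes a b :: "'a::complex_inner"
  shows "(norm (a - b))\<^sup>2 + (norm (a + b))\<^sup>2 = 2 * (norm a)\<^sup>2 + 2 * (norm b)\<^sup>2"
  using norm_diff_square[of a b] norm_diff_square[of a "- b"] cinner_diff_right[of a 0 b] by simp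

lemma Re_cinner_le: "Re (cinner x y) \<le> norm x * norm y"
proof -
  have "0 \<le> (norm (scaleR (norm y) x - scaleR (norm x) y))\<^sup>2"
    by simp
  also have "\<dots> = 2 * (norm x * norm y) * (norm x * norm y - Re (cinner x y))"
    unfolding norm_diff_square
    by (simp add: scaleR_scaleC cinner_scaleC_left cinner_scaleC_right
        norm_scaleC power2_eq_square algebra_simps)
  finally show ?thesis
    by (cases "x = 0 \<or> y = 0") (auto simp: zero_le_mult_iff mult_le_0_iff)
qed

text \<open>Rotating \<open>x\<close> by a unimodular factor makes the inner product real.\<close>
lemma cinner_Cauchy_Schwarz: "cmod (cinner x y) \<le> norm x * norm y"
proof (cases "cinner x y = 0")
  case False
  define u where "u = cinner x y / complex_of_real (cmod (cinner x y))"
  have "cnj (cinner x y) * cinner x y = complex_of_real ((cmod (cinner x y))\<^sup>2)"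
    using complex_norm_square[of "cinner x y"] by (simp add: mult.commute)
  hence "cinner (scaleC u x) y = complex_of_real (cmod (cinner x y))"
    using False by (simp add: u_def cinner_scaleC_left power2_eq_square)
  hence "cmod (cinner x y) = Re (cinner (scaleC u x) y)"
    by simp
  also have "\<dots> \<le> norm (scaleC u x) * norm y"
    by (rule Re_cinner_le)
  also have "\<dots> = norm x * norm y"
    using False by (simp add: u_def norm_scaleC norm_divide)
  finally show ?thesis .
qed simp

lemma bounded_clinear_bounded_linear: "bounded_clinear T \<Longrightarrow> bounded_linear T"
  by (simp add: bounded_clinear_def)

lemma bounded_clinear_scaleC: "bounded_clinear T \<Longrightarrow> T (scaleC c x) = scaleC c (T x)"
  by (simp add: bounded_clinear_def)

lemma bounded_clinear_add: "bounded_clinear T \<Longrightarrow> T (x + y) = T x + T y"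
  by (simp add: bounded_clinear_def linear_simps)

lemma bounded_clinear_diff: "bounded_clinear T \<Longrightarrow> T (x - y) = T x - T y"
  by (simp add: bounded_clinear_def linear_simps)

lemma bounded_clinear_zero: "bounded_clinear T \<Longrightarrow> T 0 = 0"
  by (simp add: bounded_clinear_def linear_simps)

lemma bounded_clinear_norm_le: "bounded_clinear T \<Longrightarrow> norm (T x) \<le> onorm T * norm x"
  by (simp add: bounded_clinear_def onorm)

lemma bounded_clinearI:
  assumes "\<And>x y. f (x + y) = f x + f y" and "\<And>c x. f (scaleC c x) = scaleC c (f x)"
    and "\<And>x. norm (f x) \<le> norm x * K"
  shows "bounded_clinear f"
  unfolding bounded_clinear_def
  by (auto intro!: bounded_linear_intro[where K=K] simp: assms scaleR_scaleC)

lemma bounded_clinear_compose: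
  "bounded_clinear A \<Longrightarrow> bounded_clinear B \<Longrightarrow> bounded_clinear (A \<circ> B)"
  unfolding bounded_clinear_def comp_def by (auto intro: bounded_linear_compose)

lemma bounded_linear_scaleC: "bounded_linear (scaleC c :: 'a::complex_normed_vector \<Rightarrow> 'a)"
  by (rule bounded_linear_intro[where K="cmod c"])
     (auto simp: scaleC_add_right scaleR_scaleC scaleC_scaleC mult.commute norm_scaleC)

lemma bounded_clinear_minus_scaleC:
  assumes "bounded_clinear f" and "bounded_clinear g"
  shows "bounded_clinear (\<lambda>x. f x - scaleC c (g x))"
  using assms bounded_linear_compose[OF bounded_linear_scaleC, of g c]
  unfolding bounded_clinear_def
  by (auto intro: bounded_linear_sub simp: scaleC_scaleC mult.commute cv.scale_right_diff_distrib)

lemma bounded_clinear_ident: "bounded_clinear (\<lambda>x. x)"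
  by (simp add: bounded_clinear_def)

lemma bounded_clinear_module_hom: "bounded_clinear f \<Longrightarrow> module_hom scaleC scaleC f"
  by unfold_locales (simp_all add: bounded_clinear_add bounded_clinear_scaleC)

lemma subspace_closure:
  fixes S :: "'a::complex_normed_vector set"
  assumes "cv.subspace S"
  shows "cv.subspace (closure S)"
  unfolding cv.subspace_def
proof (intro conjI ballI allI)
  show "0 \<in> closure S"
    using assms cv.subspace_0 closure_subset by blast
next
  fix x y assume "x \<in> closure S" "y \<in> closure S"
  then obtain f g where f: "\<forall>n. f n \<in> S" "f \<longlonglongrightarrow> x" and g: "\<forall>n. g n \<in> S" "g \<longlonglongrightarrow> y"
    by (meson closure_sequential)
  have "\<forall>n. f n + g n \<in> S"
    using f(1) g(1) assms cv.subspace_add by blast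
  moreover have "(\<lambda>n. f n + g n) \<longlonglongrightarrow> x + y"
    using f(2) g(2) by (rule tendsto_add)
  ultimately show "x + y \<in> closure S"
    by (meson closure_sequential)
next
  fix c x assume "x \<in> closure S"
  then obtain f where f: "\<forall>n. f n \<in> S" "f \<longlonglongrightarrow> x"
    by (meson closure_sequential)
  have "\<forall>n. scaleC c (f n) \<in> S"
    using f(1) assms cv.subspace_scale by blast
  moreover have "(\<lambda>n. scaleC c (f n)) \<longlonglongrightarrow> scaleC c x"
    using f(2) by (rule bounded_linear.tendsto[OF bounded_linear_scaleC])
  ultimately show "scaleC c x \<in> closure S"
    by (meson closure_sequential)
qed

section \<open>Orthogonal projection onto a closed subspace\<close>

lemma norm_diff_square_near_minimum:
  fixes x a b :: "'a::complex_inner"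
  assumes mid: "d \<le> norm (x - scaleR (1/2) (a + b))"
    and a: "norm (x - a) \<le> d + e" and b: "norm (x - b) \<le> d + e'"
    and "0 \<le> d" "0 \<le> e" "0 \<le> e'"
  shows "(norm (a - b))\<^sup>2 \<le> 4 * d * (e + e') + 2 * (e\<^sup>2 + e'\<^sup>2)"
proof -
  have "(x - b) + (x - a) = scaleR 2 (x - scaleR (1/2) (a + b))"
    by (simp add: algebra_simps scaleR_2)
  hence "(norm (a - b))\<^sup>2 + (2 * norm (x - scaleR (1/2) (a + b)))\<^sup>2
      = 2 * (norm (x - b))\<^sup>2 + 2 * (norm (x - a))\<^sup>2"
    using parallelogram_law[of "x - b" "x - a"] by simp
  moreover have "(2 * d)\<^sup>2 \<le> (2 * norm (x - scaleR (1/2) (a + b)))\<^sup>2"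
    using mid \<open>0 \<le> d\<close> by (intro power_mono) auto
  moreover have "(norm (x - a))\<^sup>2 \<le> (d + e)\<^sup>2" "(norm (x - b))\<^sup>2 \<le> (d + e')\<^sup>2"
    using a b by (auto intro: power_mono)
  ultimately show ?thesis
    by (simp add: power2_eq_square algebra_simps)
qed

text \<open>A minimising sequence is Cauchy by the parallelogram law applied to its midpoints.\<close>
lemma closest_point_exists:
  fixes x :: "'a::chilbert_space"
  assumes "closed M" and sub: "cv.subspace M"
  obtains m where "m \<in> M" "\<And>m'. m' \<in> M \<Longrightarrow> norm (x - m) \<le> norm (x - m')"
proof -
  define d where "d = (INF m\<in>M. norm (x - m))"
  have M_ne: "M \<noteq> {}"
    using sub cv.subspace_0 by blast
  have d_le: "d \<le> norm (x - m)" if "m \<in> M" for m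
    unfolding d_def using that by (intro cINF_lower) (auto intro: bdd_belowI2[where m=0])
  have "0 \<le> d"
    unfolding d_def using M_ne by (intro cINF_greatest) auto
  define e where "e k = inverse (real (Suc k))" for k
  have "\<exists>m\<in>M. norm (x - m) < d + e k" for k
    using cInf_lessD[of "(\<lambda>m. norm (x - m)) ` M" "d + e k"] M_ne by (simp add: d_def e_def)
  then obtain s where sM: "\<And>k. s k \<in> M" and s: "\<And>k. norm (x - s k) < d + e k"
    by metis
  have e_lim: "e \<longlonglongrightarrow> 0"
    unfolding e_def by (rule LIMSEQ_inverse_real_of_nat)
  have e_pos: "0 \<le> e k" for k
    by (simp add: e_def)
  have e_mono: "e k \<le> e N" if "N \<le> k" for N k
    using that by (simp add: e_def le_imp_inverse_le)
  have close: "(norm (s j - s k))\<^sup>2 \<le> 8 * d * e N + 4 * (e N)\<^sup>2" if "N \<le> j" "N \<le> k" for N j k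
  proof -
    have "scaleR (1/2) (s j + s k) \<in> M"
      using sub sM by (simp add: scaleR_scaleC cv.subspace_add cv.subspace_scale)
    hence "d \<le> norm (x - scaleR (1/2) (s j + s k))"
      by (rule d_le)
    hence "(norm (s j - s k))\<^sup>2 \<le> 4 * d * (e j + e k) + 2 * ((e j)\<^sup>2 + (e k)\<^sup>2)"
      using s[of j] s[of k] \<open>0 \<le> d\<close> e_pos
      by (intro norm_diff_square_near_minimum) (auto simp: less_imp_le)
    also have "\<dots> \<le> 8 * d * e N + 4 * (e N)\<^sup>2"
    proof -
      have "(e j)\<^sup>2 \<le> (e N)\<^sup>2" "(e k)\<^sup>2 \<le> (e N)\<^sup>2"
        using e_mono that e_pos by (auto intro: power_mono)
      moreover have "4 * d * (e j + e k) \<le> 4 * d * (2 * e N)"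
        using e_mono[OF that(1)] e_mono[OF that(2)] \<open>0 \<le> d\<close> by (intro mult_left_mono) auto
      ultimately show ?thesis
        by simp
    qed
    finally show ?thesis .
  qed
  have "Cauchy s"
  proof (rule metric_CauchyI)
    fix r :: real assume "0 < r"
    have "(\<lambda>N. 8 * d * e N + 4 * (e N)\<^sup>2) \<longlonglongrightarrow> 8 * d * 0 + 4 * 0\<^sup>2"
      using e_lim by (intro tendsto_intros)
    hence "(\<lambda>N. 8 * d * e N + 4 * (e N)\<^sup>2) \<longlonglongrightarrow> 0"
      by simp
    moreover have "0 < r\<^sup>2"
      using \<open>0 < r\<close> by (rule zero_less_power)
    ultimately have "\<forall>\<^sub>F N in sequentially. 8 * d * e N + 4 * (e N)\<^sup>2 < r\<^sup>2"
      by (rule order_tendstoD(2))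
    then obtain N where N: "8 * d * e N + 4 * (e N)\<^sup>2 < r\<^sup>2"
      by (auto simp: eventually_sequentially)
    have "dist (s j) (s k) < r" if "N \<le> j" "N \<le> k" for j k
    proof -
      have "(norm (s j - s k))\<^sup>2 < r\<^sup>2"
        using close[OF that] N by linarith
      thus ?thesis
        using \<open>0 < r\<close> by (simp add: dist_norm power_less_imp_less_base)
    qed
    thus "\<exists>N. \<forall>j\<ge>N. \<forall>k\<ge>N. dist (s j) (s k) < r"
      by blast
  qed
  then obtain m where lim: "s \<longlonglongrightarrow> m"
    using Cauchy_convergent convergent_def by blast
  have "m \<in> M"
    using closed_sequentially[OF \<open>closed M\<close>] sM lim by blast
  moreover have "norm (x - m) \<le> d"
  proof (rule LIMSEQ_le)
    show "(\<lambda>k. norm (x - s k)) \<longlonglongrightarrow> norm (x - m)"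
      by (intro tendsto_intros lim)
    show "(\<lambda>k. d + e k) \<longlonglongrightarrow> d"
      using tendsto_add[OF tendsto_const e_lim, of d] by simp
    show "\<exists>N. \<forall>k\<ge>N. norm (x - s k) \<le> d + e k"
      using s less_imp_le by blast
  qed
  ultimately show thesis
    using that d_le by force
qed

lemma closest_point_orthogonal:
  fixes x m v :: "'a::complex_inner"
  assumes sub: "cv.subspace M" and "m \<in> M" and "v \<in> M"
    and closest: "\<And>m'. m' \<in> M \<Longrightarrow> norm (x - m) \<le> norm (x - m')"
  shows "cinner v (x - m) = 0"
proof -
  define a where "a = cinner v (x - m)"
  define s where "s = inverse ((norm v)\<^sup>2 + 1)"
  have "0 < (norm v)\<^sup>2 + 1"
    by (simp add: add_nonneg_pos)
  hence s: "0 < s" "s * (norm v)\<^sup>2 < 1"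
    by (auto simp: s_def field_simps)
  have "m + scaleC (complex_of_real s * a) v \<in> M"
    using sub \<open>m \<in> M\<close> \<open>v \<in> M\<close> cv.subspace_add cv.subspace_scale by blast
  hence "(norm (x - m))\<^sup>2 \<le> (norm ((x - m) - scaleC (complex_of_real s * a) v))\<^sup>2"
    using closest by (intro power_mono) (auto simp: algebra_simps)
  also have "\<dots> = (norm (x - m))\<^sup>2 - s * (cmod a)\<^sup>2 * (2 - s * (norm v)\<^sup>2)"
  proof -
    have "cinner (x - m) (scaleC (complex_of_real s * a) v) = complex_of_real (s * (cmod a)\<^sup>2)"
      using complex_norm_square[of a]
      by (simp add: cinner_scaleC_right a_def cinner_commute[of "x - m"])
    thus ?thesis
      unfolding norm_diff_square[of "x - m"]
      using s by (simp add: norm_scaleC norm_mult power2_eq_square algebra_simps)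
  qed
  finally have "s * (cmod a)\<^sup>2 * (2 - s * (norm v)\<^sup>2) \<le> 0"
    by simp
  with s show ?thesis
    by (simp add: a_def mult_le_0_iff)
qed

lemma orthogonal_projection_exists:
  fixes x :: "'a::chilbert_space"
  assumes "closed M" and "cv.subspace M"
  obtains m where "m \<in> M" "\<And>v. v \<in> M \<Longrightarrow> cinner v (x - m) = 0"
  using closest_point_exists[OF assms] closest_point_orthogonal[OF assms(2)] by metis

lemma dense_cspan_if_orth_trivial:
  fixes U :: "'a::chilbert_space set"
  assumes "orth U = {0}"
  shows "closure (cspan U) = UNIV"
proof -
  let ?M = "closure (cspan U)"
  have sub: "cv.subspace ?M"
    unfolding cspan_eq_span by (intro subspace_closure cv.subspace_span)
  have U: "U \<subseteq> ?M"
    unfolding cspan_eq_span using cv.span_superset closure_subset by blast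
  have "x \<in> ?M" for x
  proof -
    obtain m where "m \<in> ?M" and "\<And>v. v \<in> ?M \<Longrightarrow> cinner v (x - m) = 0"
      using orthogonal_projection_exists[OF closed_closure sub] by blast
    hence "x - m \<in> orth U"
      using U by (auto simp: orth_def)
    with assms \<open>m \<in> ?M\<close> show ?thesis
      by simp
  qed
  thus ?thesis
    by auto
qed

section \<open>Riesz representation and the adjoint\<close>

lemma riesz_representation:
  fixes f :: "'a::chilbert_space \<Rightarrow> complex"
  assumes f: "bounded_linear f" and scale: "\<And>c x. f (scaleC c x) = c * f x"
  obtains y where "\<And>x. f x = cinner y x"
proof -
  interpret f: bounded_linear f
    by (rule f)
  show thesis
  proof (cases "\<forall>x. f x = 0")
    case True
    with that show thesis
      by (metis cinner_zero_left)
  next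
    case False
    then obtain x0 where "f x0 \<noteq> 0"
      by blast
    let ?N = "{x. f x = 0}"
    have "closed ?N"
      using f by (intro closed_Collect_eq) (auto intro: linear_continuous_on)
    moreover have "cv.subspace ?N"
      by (auto simp: cv.subspace_def f.zero f.add scale)
    ultimately obtain m where "m \<in> ?N" and orth: "\<And>v. v \<in> ?N \<Longrightarrow> cinner v (x0 - m) = 0"
      using orthogonal_projection_exists by blast
    define z where "z = x0 - m"
    have fz: "f z \<noteq> 0"
      using \<open>f x0 \<noteq> 0\<close> \<open>m \<in> ?N\<close> by (simp add: z_def f.diff)
    hence "z \<noteq> 0"
      using f.zero by auto
    have "f x = cinner (scaleC (cnj (f z) / complex_of_real ((norm z)\<^sup>2)) z) x" for x
    proof -
      have "f (x - scaleC (f x / f z) z) = 0"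
        using fz by (simp add: f.diff scale)
      hence "cinner z (x - scaleC (f x / f z) z) = 0"
        using orth by (metis cinner_commute complex_cnj_zero mem_Collect_eq z_def)
      hence "cinner z x = f x / f z * complex_of_real ((norm z)\<^sup>2)"
        by (simp add: cinner_diff_right cinner_scaleC_right cinner_self_norm)
      thus ?thesis
        using fz \<open>z \<noteq> 0\<close> by (simp add: cinner_scaleC_left)
    qed
    with that show thesis
      by blast
  qed
qed

lemma adjoint_exists:
  fixes T :: "'a::chilbert_space \<Rightarrow> 'a"
  assumes T: "bounded_clinear T"
  shows "\<exists>S. \<forall>x y. cinner (T x) y = cinner x (S y)"
proof -
  have "\<exists>w. \<forall>x. cinner (T x) y = cinner x w" for y
  proof -
    have "bounded_linear (\<lambda>x. cinner y (T x))"
    proof (rule bounded_linear_intro[where K="norm y * onorm T"])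
      show "cinner y (T (x + x')) = cinner y (T x) + cinner y (T x')" for x x'
        by (simp add: bounded_clinear_add[OF T] cinner_add_right)
      show "cinner y (T (scaleR r x)) = scaleR r (cinner y (T x))" for r x
        by (simp add: scaleR_scaleC bounded_clinear_scaleC[OF T] cinner_scaleC_right
            scaleR_conv_of_real)
      show "norm (cinner y (T x)) \<le> norm x * (norm y * onorm T)" for x
        using cinner_Cauchy_Schwarz[of y "T x"] bounded_clinear_norm_le[OF T, of x]
          mult_left_mono[of "norm (T x)" "onorm T * norm x" "norm y"]
        by (simp add: algebra_simps)
    qed
    moreover have "cinner y (T (scaleC c x)) = c * cinner y (T x)" for c x
      by (simp add: bounded_clinear_scaleC[OF T] cinner_scaleC_right)
    ultimately obtain w where "\<And>x. cinner y (T x) = cinner w x"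
      using riesz_representation by blast
    thus ?thesis
      by (metis cinner_commute)
  qed
  thus ?thesis
    by metis
qed

lemma cinner_adjoint: "bounded_clinear T \<Longrightarrow> cinner (T x) y = cinner x (adjoint T y)"
  using someI_ex[OF adjoint_exists] unfolding adjoint_def by blast

lemma cinner_adjoint_left: "bounded_clinear T \<Longrightarrow> cinner (adjoint T y) x = cinner y (T x)"
  by (metis cinner_adjoint cinner_commute)

lemma norm_adjoint_le:
  assumes T: "bounded_clinear T"
  shows "norm (adjoint T y) \<le> onorm T * norm y"
proof -
  have "(norm (adjoint T y))\<^sup>2 = cmod (cinner y (T (adjoint T y)))"
    by (simp add: cinner_adjoint_left[OF T, symmetric] cinner_self_norm norm_power)
  also have "\<dots> \<le> norm y * (onorm T * norm (adjoint T y))"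
    using cinner_Cauchy_Schwarz bounded_clinear_norm_le[OF T] mult_left_mono norm_ge_zero
      order_trans
    by metis
  finally show ?thesis
    by (cases "adjoint T y = 0") (auto simp: power2_eq_square algebra_simps onorm_pos_le
        bounded_clinear_bounded_linear[OF T])
qed

lemma bounded_clinear_adjoint:
  assumes T: "bounded_clinear T"
  shows "bounded_clinear (adjoint T)"
proof (rule bounded_clinearI[where K="onorm T"])
  show "adjoint T (x + y) = adjoint T x + adjoint T y" for x y
    by (rule cinner_ext) (simp add: cinner_adjoint[OF T, symmetric] cinner_add_right)
  show "adjoint T (scaleC c x) = scaleC c (adjoint T x)" for c x
    by (rule cinner_ext) (simp add: cinner_adjoint[OF T, symmetric] cinner_scaleC_right)
  show "norm (adjoint T x) \<le> norm x * onorm T" for x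
    using norm_adjoint_le[OF T, of x] by (simp add: mult.commute)
qed

lemma onorm_adjoint_le: "bounded_clinear T \<Longrightarrow> onorm (adjoint T) \<le> onorm T"
  by (rule onorm_bound) (simp_all add: norm_adjoint_le onorm_pos_le bounded_clinear_bounded_linear)

lemma adjoint_right_inverse:
  assumes "bounded_clinear T" and "bounded_clinear S" and "\<And>x. S (T x) = x"
  shows "adjoint T (adjoint S y) = y"
  by (rule cinner_ext) (simp add: cinner_adjoint[symmetric] assms)

lemma orth_range_eq_kernel_adjoint:
  assumes T: "bounded_clinear T"
  shows "orth (range T) = kernel (adjoint T)"
  by (auto simp: orth_def kernel_def cinner_adjoint[OF T])
     (metis cinner_self_eq_0)

lemma left_invertible_bounded_clinear: "left_invertible T \<Longrightarrow> bounded_clinear T"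
  by (simp add: left_invertible_def)

lemma kernel_left_invertible:
  assumes "left_invertible T"
  shows "kernel T = {0}"
proof -
  obtain S where S: "bounded_clinear S" "\<And>x. S (T x) = x"
    using assms unfolding left_invertible_def by blast
  have "x = 0" if "T x = 0" for x
    using S(2)[of x] bounded_clinear_zero[OF S(1)] that by simp
  moreover have "T 0 = 0"
    using assms by (simp add: left_invertible_bounded_clinear bounded_clinear_zero)
  ultimately show ?thesis
    by (auto simp: kernel_def)
qed

lemma closed_range_left_invertible:
  assumes "left_invertible T"
  shows "closed (range T)"
proof -
  obtain S where S: "bounded_clinear S" "\<And>x. S (T x) = x"
    using assms unfolding left_invertible_def by blast
  have T: "bounded_clinear T"
    using assms by (rule left_invertible_bounded_clinear)
  have "range T = {y. T (S y) = y}"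
  proof (intro equalityI subsetI)
    show "y \<in> range T" if "y \<in> {y. T (S y) = y}" for y
      using that by (intro image_eqI[where x="S y"]) auto
  qed (auto simp: S(2))
  moreover have "continuous_on UNIV (\<lambda>y. T (S y))"
    using bounded_clinear_bounded_linear[OF T] bounded_clinear_bounded_linear[OF S(1)]
    by (rule linear_continuous_on[OF bounded_linear_compose])
  hence "closed {y. T (S y) = y}"
    using continuous_on_id by (rule closed_Collect_eq)
  ultimately show ?thesis
    by simp
qed

lemma bounded_below_inj:
  assumes "bounded_clinear A" and "\<And>x. norm x \<le> c * norm (A x)"
  shows "inj A"
proof (rule injI)
  fix x y assume "A x = A y"
  thus "x = y"
    using assms(2)[of "x - y"] by (simp add: bounded_clinear_diff[OF assms(1)])
qed

lemma bounded_clinear_inv: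
  assumes A: "bounded_clinear A" and "surj A" and below: "\<And>x. norm x \<le> c * norm (A x)"
  shows "bounded_clinear (inv A)"
proof -
  have inv_eq: "inv A y = x \<longleftrightarrow> A x = y" for x y
    using bounded_below_inj[OF A below] \<open>surj A\<close> by (metis inv_f_f surj_f_inv_f)
  show ?thesis
  proof (rule bounded_clinearI[where K=c])
    show "inv A (x + y) = inv A x + inv A y" for x y
      by (simp add: inv_eq bounded_clinear_add[OF A] \<open>surj A\<close> surj_f_inv_f)
    show "inv A (scaleC a x) = scaleC a (inv A x)" for a x
      by (simp add: inv_eq bounded_clinear_scaleC[OF A] \<open>surj A\<close> surj_f_inv_f)
    show "norm (inv A x) \<le> norm x * c" for x
      using below[of "inv A x"] by (simp add: \<open>surj A\<close> surj_f_inv_f mult.commute)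
  qed
qed

lemma adjoint_comp_bounded_below:
  assumes "left_invertible T"
  obtains c where "\<And>x. norm x \<le> c * norm (adjoint T (T x))"
proof -
  obtain S where S: "bounded_clinear S" "\<And>x. S (T x) = x"
    using assms unfolding left_invertible_def by blast
  have T: "bounded_clinear T"
    using assms by (rule left_invertible_bounded_clinear)
  have "norm x \<le> (onorm S)\<^sup>2 * norm (adjoint T (T x))" for x
  proof -
    have "norm x \<le> onorm S * norm (T x)"
      using bounded_clinear_norm_le[OF S(1), of "T x"] by (simp add: S(2))
    hence "(norm x)\<^sup>2 \<le> (onorm S)\<^sup>2 * (norm (T x))\<^sup>2"
      by (metis norm_ge_zero power_mono power_mult_distrib)
    also have "\<dots> \<le> (onorm S)\<^sup>2 * (norm x * norm (adjoint T (T x)))"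
    proof (rule mult_left_mono)
      have "(norm (T x))\<^sup>2 = cmod (cinner x (adjoint T (T x)))"
        by (simp add: cinner_adjoint[OF T, symmetric] cinner_self_norm norm_power)
      also have "\<dots> \<le> norm x * norm (adjoint T (T x))"
        by (rule cinner_Cauchy_Schwarz)
      finally show "(norm (T x))\<^sup>2 \<le> norm x * norm (adjoint T (T x))" .
    qed simp
    finally have "norm x * norm x \<le> ((onorm S)\<^sup>2 * norm (adjoint T (T x))) * norm x"
      by (simp add: power2_eq_square algebra_simps)
    thus ?thesis
      by (cases "x = 0") (auto simp: mult_le_cancel_right intro: mult_nonneg_nonneg)
  qed
  with that show thesis .
qed

lemma surj_adjoint_comp:
  assumes "left_invertible T"
  shows "surj (adjoint T \<circ> T)"
proof -
  obtain S where S: "bounded_clinear S" "\<And>x. S (T x) = x"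
    using assms unfolding left_invertible_def by blast
  have T: "bounded_clinear T"
    using assms by (rule left_invertible_bounded_clinear)
  have "y \<in> range (adjoint T \<circ> T)" for y
  proof -
    have "cv.subspace (range T)"
      using module_hom.subspace_image[OF bounded_clinear_module_hom[OF T] cv.subspace_UNIV] .
    then obtain m where "m \<in> range T"
        and "\<And>v. v \<in> range T \<Longrightarrow> cinner v (adjoint S y - m) = 0"
      using orthogonal_projection_exists[OF closed_range_left_invertible[OF assms]] by blast
    then obtain u where "m = T u" and "adjoint S y - T u \<in> kernel (adjoint T)"
      by (auto simp: orth_range_eq_kernel_adjoint[OF T, symmetric] orth_def)
    hence "adjoint T (T u) = y"
      by (simp add: kernel_def bounded_clinear_diff[OF bounded_clinear_adjoint[OF T]]
          adjoint_right_inverse[OF T S])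
    thus ?thesis
      by (metis comp_apply rangeI)
  qed
  thus ?thesis
    by auto
qed

lemma adjoint_comp_invertible:
  assumes "left_invertible T"
  shows "bij (adjoint T \<circ> T)" and "bounded_clinear (inv (adjoint T \<circ> T))"
proof -
  have A: "bounded_clinear (adjoint T \<circ> T)"
    using assms
    by (intro bounded_clinear_compose bounded_clinear_adjoint left_invertible_bounded_clinear)
  obtain c where below: "\<And>x. norm x \<le> c * norm ((adjoint T \<circ> T) x)"
    using adjoint_comp_bounded_below[OF assms] by auto
  show "bij (adjoint T \<circ> T)"
    using bounded_below_inj[OF A below] surj_adjoint_comp[OF assms] by (rule bijI)
  show "bounded_clinear (inv (adjoint T \<circ> T))"
    using A surj_adjoint_comp[OF assms] below by (rule bounded_clinear_inv)
qed

lemma bounded_clinear_moore_penrose: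
  "left_invertible T \<Longrightarrow> bounded_clinear (moore_penrose T)"
  unfolding moore_penrose_def
  by (intro bounded_clinear_compose adjoint_comp_invertible bounded_clinear_adjoint
      left_invertible_bounded_clinear)

lemma moore_penrose_left_inverse:
  assumes "left_invertible T"
  shows "moore_penrose T (T x) = x"
  using bij_is_inj[OF adjoint_comp_invertible(1)[OF assms]]
  by (simp add: moore_penrose_def inv_f_f[where f="adjoint T \<circ> T", simplified])

lemma adjoint_moore_penrose_residual:
  assumes "left_invertible T"
  shows "adjoint T (z - T (moore_penrose T z)) = 0"
  using bij_is_surj[OF adjoint_comp_invertible(1)[OF assms]]
    bounded_clinear_adjoint[OF left_invertible_bounded_clinear[OF assms]]
  by (simp add: moore_penrose_def bounded_clinear_diff
      surj_f_inv_f[where f="adjoint T \<circ> T", simplified])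

lemma fredholm_left_invertible_kernel_adjoint:
  assumes "left_invertible T" and "fredholm T"
  shows "fin_cdim (kernel (adjoint T))"
    and "int (cdim (kernel (adjoint T))) = - fredholm_index T"
  using assms orth_range_eq_kernel_adjoint[OF left_invertible_bounded_clinear[OF assms(1)]]
  by (simp_all add: fredholm_def fredholm_index_def kernel_left_invertible cdim_subset_zero)

section \<open>Small perturbations of a right invertible operator\<close>

definition eigenspace :: "('a::complex_vector \<Rightarrow> 'a) \<Rightarrow> complex \<Rightarrow> 'a set" where
  "eigenspace R \<mu> = kernel (\<lambda>x. R x - scaleC \<mu> x)"

lemma eigenspace_0 [simp]: "eigenspace R 0 = kernel R"
  by (simp add: eigenspace_def)

lemma op_spectrum_if_eigenvector:
  assumes "x \<in> eigenspace R \<mu>" and "x \<noteq> 0"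
  shows "\<mu> \<in> op_spectrum R"
  unfolding op_spectrum_def
proof (intro CollectI notI)
  assume "invertible_op (\<lambda>x. R x - scaleC \<mu> x)"
  then obtain S where S: "bounded_clinear S" "\<And>y. S (R y - scaleC \<mu> y) = y"
    unfolding invertible_op_def by blast
  have "x = S 0"
    using S(2)[of x] assms(1) by (simp add: eigenspace_def kernel_def)
  also have "S 0 = 0"
    using S(1) by (rule bounded_clinear_zero)
  finally show False
    using assms(2) by contradiction
qed

lemma norm_le_id_minus_scaleC:
  assumes G: "bounded_clinear G"
  shows "(1 - cmod \<mu> * onorm G) * norm y \<le> norm (y - scaleC \<mu> (G y))"
proof -
  have "norm y \<le> norm (y - scaleC \<mu> (G y)) + norm (scaleC \<mu> (G y))"
    by (metis diff_add_cancel norm_triangle_ineq)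
  also have "norm (scaleC \<mu> (G y)) \<le> cmod \<mu> * (onorm G * norm y)"
    by (simp add: norm_scaleC mult_left_mono bounded_clinear_norm_le[OF G])
  finally show ?thesis
    by (simp add: algebra_simps)
qed

lemma inj_id_minus_scaleC:
  assumes G: "bounded_clinear G" and small: "cmod \<mu> * onorm G < 1"
  shows "inj (\<lambda>y. y - scaleC \<mu> (G y))"
proof (rule bounded_below_inj)
  show "bounded_clinear (\<lambda>y. y - scaleC \<mu> (G y))"
    using bounded_clinear_ident G by (rule bounded_clinear_minus_scaleC)
  show "norm y \<le> inverse (1 - cmod \<mu> * onorm G) * norm (y - scaleC \<mu> (G y))" for y
    using norm_le_id_minus_scaleC[OF G, of \<mu> y] small by (simp add: field_simps)
qed

text \<open>The solution of \<open>y - \<mu> G y = e\<close> is the fixed point of the contraction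
  \<open>y \<mapsto> e + \<mu> G y\<close>.\<close>
lemma surj_id_minus_scaleC:
  fixes G :: "'a::{complex_normed_vector, complete_space} \<Rightarrow> 'a"
  assumes G: "bounded_clinear G" and small: "cmod \<mu> * onorm G < 1"
  shows "surj (\<lambda>y. y - scaleC \<mu> (G y))"
proof -
  have "\<exists>y. e = y - scaleC \<mu> (G y)" for e
  proof -
    have "\<exists>!y. e + scaleC \<mu> (G y) = y"
    proof (rule banach_fix_type[where c="cmod \<mu> * onorm G"])
      show "0 \<le> cmod \<mu> * onorm G"
        using G by (simp add: onorm_pos_le bounded_clinear_bounded_linear)
      show "\<forall>x y. dist (e + scaleC \<mu> (G x)) (e + scaleC \<mu> (G y))
          \<le> cmod \<mu> * onorm G * dist x y"
      proof (intro allI)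
        fix x y
        have "e + scaleC \<mu> (G x) - (e + scaleC \<mu> (G y)) = scaleC \<mu> (G (x - y))"
          by (simp add: bounded_clinear_diff[OF G] cv.scale_right_diff_distrib)
        thus "dist (e + scaleC \<mu> (G x)) (e + scaleC \<mu> (G y)) \<le> cmod \<mu> * onorm G * dist x y"
          using bounded_clinear_norm_le[OF G, of "x - y"]
          by (simp add: dist_norm norm_scaleC mult.assoc mult_left_mono)
      qed
    qed (rule small)
    then obtain y where "e + scaleC \<mu> (G y) = y"
      by blast
    hence "e = y - scaleC \<mu> (G y)"
      by (simp add: algebra_simps)
    thus ?thesis
      by blast
  qed
  thus ?thesis
    unfolding surj_def by blast
qed

lemma eigenspace_shift_image:
  fixes R G :: "'a::{complex_normed_vector, complete_space} \<Rightarrow> 'a"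
  assumes R: "bounded_clinear R" and G: "bounded_clinear G" and RG: "\<And>y. R (G y) = y"
    and small: "cmod \<mu> * onorm G < 1"
  shows "(\<lambda>y. y - scaleC \<mu> (G y)) ` eigenspace R \<mu> = kernel R"
proof -
  have shift: "R (y - scaleC \<mu> (G y)) = R y - scaleC \<mu> y" for y
    by (simp add: bounded_clinear_diff[OF R] bounded_clinear_scaleC[OF R] RG)
  show ?thesis
  proof (intro equalityI subsetI)
    fix e assume "e \<in> kernel R"
    obtain y where y: "e = y - scaleC \<mu> (G y)"
      using surjD[OF surj_id_minus_scaleC[OF G small]] by blast
    with \<open>e \<in> kernel R\<close> have "y \<in> eigenspace R \<mu>"
      by (simp add: eigenspace_def kernel_def shift)
    with y show "e \<in> (\<lambda>y. y - scaleC \<mu> (G y)) ` eigenspace R \<mu>"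
      by (rule image_eqI)
  qed (auto simp: eigenspace_def kernel_def shift)
qed

lemma surj_minus_scaleC_right_invertible:
  fixes R G :: "'a::{complex_normed_vector, complete_space} \<Rightarrow> 'a"
  assumes R: "bounded_clinear R" and G: "bounded_clinear G" and RG: "\<And>y. R (G y) = y"
    and small: "cmod \<mu> * onorm G < 1"
  shows "surj (\<lambda>x. R x - scaleC \<mu> x)"
proof -
  have "\<exists>y. z = R y - scaleC \<mu> y" for z
  proof -
    obtain y where "G z = y - scaleC \<mu> (G y)"
      using surjD[OF surj_id_minus_scaleC[OF G small]] by blast
    hence "R (G z) = R (y - scaleC \<mu> (G y))"
      by simp
    hence "z = R y - scaleC \<mu> y"
      by (simp add: RG bounded_clinear_diff[OF R] bounded_clinear_scaleC[OF R])
    thus ?thesis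
      by blast
  qed
  thus ?thesis
    unfolding surj_def by blast
qed

lemma eigenspace_dim_right_invertible:
  fixes R G :: "'a::{complex_normed_vector, complete_space} \<Rightarrow> 'a"
  assumes R: "bounded_clinear R" and G: "bounded_clinear G" and RG: "\<And>y. R (G y) = y"
    and small: "cmod \<mu> * onorm G < 1" and fin: "fin_cdim (kernel R)"
  shows "fin_cdim (eigenspace R \<mu>)" and "cdim (eigenspace R \<mu>) = cdim (kernel R)"
proof -
  let ?B = "\<lambda>y. y - scaleC \<mu> (G y)"
  have hom: "module_hom scaleC scaleC ?B"
    using bounded_clinear_ident G
    by (intro bounded_clinear_module_hom bounded_clinear_minus_scaleC)
  have inj: "inj ?B"
    using G small by (rule inj_id_minus_scaleC)
  have image: "?B ` eigenspace R \<mu> = kernel R"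
    using R G RG small by (rule eigenspace_shift_image)
  have "cv.subspace (eigenspace R \<mu>)"
    unfolding eigenspace_def kernel_def
    using bounded_clinear_minus_scaleC[OF R bounded_clinear_ident, of \<mu>]
    by (rule module_hom.subspace_kernel[OF bounded_clinear_module_hom])
  thus "fin_cdim (eigenspace R \<mu>)"
    using fin_cdim_inj_image[OF hom inj] fin image by simp
  show "cdim (eigenspace R \<mu>) = cdim (kernel R)"
    using cdim_inj_image[OF hom inj] image by metis
qed

section \<open>Density of the eigenvectors of the adjoint\<close>

text \<open>For \<open>\<parallel>L\<parallel> > 0\<close> the index set is the disc \<open>\<Omega>\<^sub>T\<close> of the statement, written
  without division.\<close>
definition adjoint_eigenvectors :: "('a::chilbert_space \<Rightarrow> 'a) \<Rightarrow> 'a set" where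
  "adjoint_eigenvectors T =
     (\<Union>\<mu>\<in>{\<mu>. cmod \<mu> * onorm (moore_penrose T) < 1}. eigenspace (adjoint T) \<mu>)"

context
  fixes T :: "'a::chilbert_space \<Rightarrow> 'a"
  assumes T: "left_invertible T"
begin

lemma adjoint_moore_penrose_right_inverse: "adjoint T (adjoint (moore_penrose T) y) = y"
  using left_invertible_bounded_clinear[OF T] bounded_clinear_moore_penrose[OF T]
    moore_penrose_left_inverse[OF T]
  by (rule adjoint_right_inverse)

lemma small_adjoint_moore_penrose:
  assumes "cmod \<mu> * onorm (moore_penrose T) < 1"
  shows "cmod \<mu> * onorm (adjoint (moore_penrose T)) < 1"
proof -
  have "cmod \<mu> * onorm (adjoint (moore_penrose T)) \<le> cmod \<mu> * onorm (moore_penrose T)"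
    using onorm_adjoint_le[OF bounded_clinear_moore_penrose[OF T]] by (simp add: mult_left_mono)
  with assms show ?thesis
    by linarith
qed

lemma eigenspace_shift_moore_penrose:
  assumes "cmod \<mu> * onorm (moore_penrose T) < 1"
  shows "(\<lambda>y. y - scaleC \<mu> (adjoint (moore_penrose T) y)) ` eigenspace (adjoint T) \<mu>
    = kernel (adjoint T)"
  using bounded_clinear_adjoint[OF left_invertible_bounded_clinear[OF T]]
    bounded_clinear_adjoint[OF bounded_clinear_moore_penrose[OF T]]
    adjoint_moore_penrose_right_inverse small_adjoint_moore_penrose[OF assms]
  by (rule eigenspace_shift_image)

lemma surj_adjoint_minus_scaleC:
  assumes "cmod \<mu> * onorm (moore_penrose T) < 1"
  shows "surj (\<lambda>x. adjoint T x - scaleC \<mu> x)"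
  using bounded_clinear_adjoint[OF left_invertible_bounded_clinear[OF T]]
    bounded_clinear_adjoint[OF bounded_clinear_moore_penrose[OF T]]
    adjoint_moore_penrose_right_inverse small_adjoint_moore_penrose[OF assms]
  by (rule surj_minus_scaleC_right_invertible)

lemma eigenspace_adjoint_dim:
  assumes "cmod \<mu> * onorm (moore_penrose T) < 1" and "fin_cdim (kernel (adjoint T))"
  shows "fin_cdim (eigenspace (adjoint T) \<mu>)"
    and "cdim (eigenspace (adjoint T) \<mu>) = cdim (kernel (adjoint T))"
  using eigenspace_dim_right_invertible[OF
      bounded_clinear_adjoint[OF left_invertible_bounded_clinear[OF T]]
      bounded_clinear_adjoint[OF bounded_clinear_moore_penrose[OF T]]
      adjoint_moore_penrose_right_inverse small_adjoint_moore_penrose[OF assms(1)] assms(2)]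
  by simp_all

lemma onorm_moore_penrose_pos:
  fixes x :: 'a
  assumes "x \<noteq> 0"
  shows "0 < onorm (moore_penrose T)"
  using assms moore_penrose_left_inverse[OF T, of x]
    onorm_pos_lt[OF bounded_clinear_bounded_linear[OF bounded_clinear_moore_penrose[OF T]]]
  by metis

lemma kernel_adjoint_subset_eigenvectors: "kernel (adjoint T) \<subseteq> adjoint_eigenvectors T"
  unfolding adjoint_eigenvectors_def by (auto intro!: UN_I[of 0])

lemma orth_eigenvectors_fixed:
  assumes "z \<in> orth (adjoint_eigenvectors T)"
  shows "T (moore_penrose T z) = z"
proof -
  define d where "d = z - T (moore_penrose T z)"
  have d: "adjoint T d = 0"
    unfolding d_def using T by (rule adjoint_moore_penrose_residual)
  hence "cinner d z = 0"
    using assms kernel_adjoint_subset_eigenvectors by (auto simp: orth_def kernel_def)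
  moreover have "cinner d (T (moore_penrose T z)) = 0"
    using d cinner_adjoint_left[OF left_invertible_bounded_clinear[OF T], symmetric] by simp
  ultimately have "cinner d d = 0"
    by (simp add: d_def cinner_diff_right)
  thus ?thesis
    by (simp add: d_def)
qed

text \<open>Split \<open>w = e + \<mu> L\<^sup>* w\<close> with \<open>e \<in> ker T\<^sup>*\<close>; since \<open>\<langle>L\<^sup>* w, z\<rangle> = \<langle>w, L z\<rangle>\<close>,
  orthogonality of \<open>z\<close> to \<open>w\<close> and to \<open>e\<close> passes to \<open>L z\<close>.\<close>
lemma cinner_eigenvector_moore_penrose:
  assumes z: "z \<in> orth (adjoint_eigenvectors T)" and w: "w \<in> eigenspace (adjoint T) \<mu>"
    and small: "cmod \<mu> * onorm (moore_penrose T) < 1" and "\<mu> \<noteq> 0"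
  shows "cinner w (moore_penrose T z) = 0"
proof -
  define e where "e = w - scaleC \<mu> (adjoint (moore_penrose T) w)"
  have "e \<in> kernel (adjoint T)"
    using w eigenspace_shift_moore_penrose[OF small] by (auto simp: e_def)
  hence "cinner e z = 0"
    using z kernel_adjoint_subset_eigenvectors by (auto simp: orth_def)
  moreover have "cinner w z = 0"
    using z w small by (auto simp: orth_def adjoint_eigenvectors_def)
  moreover have "cinner w z = cinner e z + cnj \<mu> * cinner w (moore_penrose T z)"
    by (simp add: e_def cinner_diff_left cinner_scaleC_left
        cinner_adjoint_left[OF bounded_clinear_moore_penrose[OF T]])
  ultimately show ?thesis
    using \<open>\<mu> \<noteq> 0\<close> by simp
qed

text \<open>The case \<open>\<mu> = 0\<close>: approximate \<open>w\<close> by eigenvectors for small positive \<open>\<mu> = t\<close>.\<close>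
lemma cinner_kernel_adjoint_moore_penrose:
  assumes z: "z \<in> orth (adjoint_eigenvectors T)" and w: "w \<in> kernel (adjoint T)"
  shows "cinner w (moore_penrose T z) = 0"
proof -
  let ?L = "moore_penrose T"
  let ?G = "adjoint ?L"
  let ?c = "onorm ?L * norm w * norm (?L z)"
  have L: "bounded_clinear ?L"
    using T by (rule bounded_clinear_moore_penrose)
  have bound: "cmod (cinner w (?L z)) \<le> t * ?c / (1 - t * onorm ?L)"
    if t: "0 < t" "t * onorm ?L < 1" for t
  proof -
    have small: "cmod (complex_of_real t) * onorm ?L < 1"
      using t by simp
    then obtain y where y: "y \<in> eigenspace (adjoint T) (complex_of_real t)"
        and w_eq: "w = y - scaleC (complex_of_real t) (?G y)"
      using w eigenspace_shift_moore_penrose by blast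
    have "cinner y (?L z) = 0"
      using z y small t by (intro cinner_eigenvector_moore_penrose) auto
    hence "cmod (cinner w (?L z)) = t * cmod (cinner (?G y) (?L z))"
      using t by (simp add: w_eq cinner_diff_left cinner_scaleC_left norm_mult)
    also have "\<dots> \<le> t * (onorm ?L * norm y * norm (?L z))"
    proof -
      have "cmod (cinner (?G y) (?L z)) \<le> norm (?G y) * norm (?L z)"
        by (rule cinner_Cauchy_Schwarz)
      also have "\<dots> \<le> onorm ?L * norm y * norm (?L z)"
        using norm_adjoint_le[OF L, of y] by (rule mult_right_mono) simp
      finally show ?thesis
        using t by (simp add: mult_left_mono)
    qed
    also have "\<dots> \<le> t * ?c / (1 - t * onorm ?L)"
    proof -
      have "(1 - t * onorm ?L) * norm y \<le> (1 - t * onorm ?G) * norm y"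
        using t onorm_adjoint_le[OF L] by (intro mult_right_mono) auto
      also have "\<dots> \<le> norm w"
        using norm_le_id_minus_scaleC[OF bounded_clinear_adjoint[OF L], of "complex_of_real t" y] t
        by (simp add: w_eq)
      finally have "norm y \<le> norm w / (1 - t * onorm ?L)"
        using t by (simp add: field_simps)
      hence "t * (onorm ?L * norm y * norm (?L z))
          \<le> t * (onorm ?L * (norm w / (1 - t * onorm ?L)) * norm (?L z))"
        using t onorm_pos_le[OF bounded_clinear_bounded_linear[OF L]]
        by (intro mult_left_mono mult_right_mono) simp_all
      thus ?thesis
        by (simp add: ac_simps)
    qed
    finally show ?thesis .
  qed
  have "((\<lambda>t. t * onorm ?L) \<longlongrightarrow> 0 * onorm ?L) (at_right 0)"
    by (intro tendsto_intros)
  hence "\<forall>\<^sub>F t in at_right 0. t * onorm ?L < 1"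
    by (rule order_tendstoD(2)) simp
  with eventually_at_right_less[of 0]
  have ev: "\<forall>\<^sub>F t in at_right 0. cmod (cinner w (?L z)) \<le> t * ?c / (1 - t * onorm ?L)"
    by eventually_elim (rule bound)
  have "((\<lambda>t. t * ?c / (1 - t * onorm ?L)) \<longlongrightarrow> 0 * ?c / (1 - 0 * onorm ?L)) (at_right 0)"
    by (intro tendsto_intros) simp_all
  hence "((\<lambda>t. t * ?c / (1 - t * onorm ?L)) \<longlongrightarrow> 0) (at_right 0)"
    by simp
  from this ev trivial_limit_at_right_real have "cmod (cinner w (?L z)) \<le> 0"
    by (rule tendsto_lowerbound)
  thus ?thesis
    by simp
qed

lemma orth_eigenvectors_moore_penrose:
  assumes z: "z \<in> orth (adjoint_eigenvectors T)"
  shows "moore_penrose T z \<in> orth (adjoint_eigenvectors T)"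
  unfolding orth_def adjoint_eigenvectors_def
proof (intro CollectI ballI, elim UN_E)
  fix w \<mu>
  assume "\<mu> \<in> {\<mu>. cmod \<mu> * onorm (moore_penrose T) < 1}" "w \<in> eigenspace (adjoint T) \<mu>"
  thus "cinner w (moore_penrose T z) = 0"
    using cinner_eigenvector_moore_penrose[OF z] cinner_kernel_adjoint_moore_penrose[OF z]
    by (cases "\<mu> = 0") auto
qed

text \<open>Every \<open>z\<close> in the orthogonal complement satisfies \<open>z = T\<^sup>k (L\<^sup>k z)\<close> for all \<open>k\<close>.\<close>
lemma orth_eigenvectors_analytic:
  assumes "analytic_op T"
  shows "orth (adjoint_eigenvectors T) = {0}"
proof -
  let ?L = "moore_penrose T"
  have "z = 0" if z: "z \<in> orth (adjoint_eigenvectors T)" for z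
  proof -
    have orth_iter: "(?L ^^ k) z \<in> orth (adjoint_eigenvectors T)" for k
      by (induction k) (simp_all add: z orth_eigenvectors_moore_penrose)
    have "z = (T ^^ k) ((?L ^^ k) z)" for k
    proof (induction k)
      case (Suc k)
      have "(?L ^^ k) z = T ((?L ^^ Suc k) z)"
        using orth_eigenvectors_fixed[OF orth_iter[of k]] by simp
      thus ?case
        using Suc.IH by (simp add: funpow_Suc_right del: funpow.simps)
    qed simp
    hence "z \<in> (\<Inter>k\<in>{1..}. range (T ^^ k))"
      by blast
    with assms show ?thesis
      by (simp add: analytic_op_def)
  qed
  thus ?thesis
    by (auto simp: orth_def)
qed

end

theorem proposition3p11:
  fixes T :: "'a::chilbert_space \<Rightarrow> 'a" and n :: nat
  assumes "n > 0"
    and "bounded_clinear T"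
    and "left_invertible T"
    and "analytic_op T"
    and "fredholm T"
    and "fredholm_index T = - int n"
  shows "cowen_douglas n {z. cmod z < 1 / onorm (moore_penrose T)} (adjoint T)"
proof -
  let ?L = "moore_penrose T"
  have ker: "fin_cdim (kernel (adjoint T))" "cdim (kernel (adjoint T)) = n"
    using fredholm_left_invertible_kernel_adjoint[OF assms(3,5)] assms(6) by simp_all
  then obtain e where "e \<in> kernel (adjoint T)" "e \<noteq> 0"
    using assms(1) by (metis cdim_pos_obtains_nonzero)
  hence "0 < onorm ?L"
    using assms(3) by (rule_tac onorm_moore_penrose_pos) simp_all
  hence disc: "{z. cmod z < 1 / onorm ?L} = {\<mu>. cmod \<mu> * onorm ?L < 1}"
    by (auto simp: field_simps)
  have eig: "fin_cdim (eigenspace (adjoint T) \<mu>)" "cdim (eigenspace (adjoint T) \<mu>) = n"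
    if "cmod \<mu> * onorm ?L < 1" for \<mu>
    using eigenspace_adjoint_dim[OF assms(3) that ker(1)] ker(2) by simp_all
  show ?thesis
    unfolding cowen_douglas_def disc eigenspace_def[symmetric] adjoint_eigenvectors_def[symmetric]
  proof (intro conjI ballI subsetI)
    show "open {\<mu>. cmod \<mu> * onorm ?L < 1}"
      by (intro open_Collect_less continuous_intros)
    show "\<mu> \<in> op_spectrum (adjoint T)" if "\<mu> \<in> {\<mu>. cmod \<mu> * onorm ?L < 1}" for \<mu>
      using eig[of \<mu>] that assms(1)
      by (metis cdim_pos_obtains_nonzero op_spectrum_if_eigenvector mem_Collect_eq)
    show "surj (\<lambda>x. adjoint T x - scaleC \<mu> x)" if "\<mu> \<in> {\<mu>. cmod \<mu> * onorm ?L < 1}" for \<mu>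
      using assms(3) that by (intro surj_adjoint_minus_scaleC) simp_all
    show "closure (cspan (adjoint_eigenvectors T)) = UNIV"
      using assms(3,4) by (intro dense_cspan_if_orth_trivial orth_eigenvectors_analytic)
  qed (use assms(2) eig in \<open>auto intro: bounded_clinear_adjoint\<close>)
qed

end
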